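(* Let $d\ge1$, $f\ge1$ and $q\ge 2f+1$ be integers, and let $H_1=\{1,\dots,q-f\}$ and $H_2=\{q+1,\dots,2q-f\}$. Then for all $(x_1,\dots,x_{2q})\in(\mathbb{R}^d)^{2q}$, $$\Big\|\mathrm{MDA}_f(x_1,\dots,x_q)-\mathrm{MDA}_f(x_{q+1},\dots,x_{2q})\Big\|_2\le 3\max_{(i,j)\in(H_1\cup H_2)^2}\|x_i-x_j\|_2 .$$
   Context: Minimum–Diameter Averaging: for integers $f\ge 0$, $q\ge 2f+1$ and vectors $x_1,\dots,x_q\in\mathbb{R}^d$, $\mathrm{MDA}_f(x_1,\dots,x_q)$ is defined as follows: among all index sets $I\subset\{1,\dots,q\}$ with $|I|=q-f$, choose one, $I^*$, minimizing $\max_{i,j\in I}\|x_i-x_j\|_2$ (ties broken arbitrarily); then $\mathrm{MDA}_f(x_1,\dots,x_q)=\frac{1}{q-f}\sum_{i\in I^*}x_i$. *)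

theory Defs
  imports "HOL-Analysis.Analysis"
begin

definition idx_diam :: "(nat \<Rightarrow> 'a::real_normed_vector) \<Rightarrow> nat set \<Rightarrow> real" where
  "idx_diam x I = Max {norm (x i - x j) | i j. i \<in> I \<and> j \<in> I}"

text \<open>I is an admissible choice of the MDA_f index set among the points indexed by S:
  a subset of S of size card S - f minimizing the diameter (ties broken arbitrarily).\<close>
definition is_mda_set :: "nat \<Rightarrow> (nat \<Rightarrow> 'a::real_normed_vector) \<Rightarrow> nat set \<Rightarrow> nat set \<Rightarrow> bool" where
  "is_mda_set f x S I \<longleftrightarrow> I \<subseteq> S \<and> card I = card S - f \<and>
     (\<forall>J. J \<subseteq> S \<and> card J = card S - f \<longrightarrow> idx_diam x I \<le> idx_diam x J)"

definition idx_avg :: "(nat \<Rightarrow> 'a::real_normed_vector) \<Rightarrow> nat set \<Rightarrow> 'a" where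
  "idx_avg x I = (1 / real (card I)) *\<^sub>R (\<Sum>i\<in>I. x i)"

end

theory Submission
  imports Defs
begin

text \<open>Each MDA set I meets the block H of the first q - f indices of its group, since
  card I + card H > q, and its diameter is at most that of H, since H is itself a candidate of
  the right size. So each average lies within diam H of a point of H, and the two such points
  are within the diameter of the union of the blocks: three steps of the triangle inequality.\<close>

lemma finite_idx_dists:
  assumes "finite I"
  shows "finite {norm (x i - x j) | i j. i \<in> I \<and> j \<in> I}"
proof -
  have "{norm (x i - x j) | i j. i \<in> I \<and> j \<in> I} = (\<lambda>(i, j). norm (x i - x j)) ` (I \<times> I)"
    by auto
  then show ?thesis using assms by simp
qed

lemma norm_diff_le_idx_diam:
  assumes "finite I" "i \<in> I" "j \<in> I"
  shows "norm (x i - x j) \<le> idx_diam x I"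
  unfolding idx_diam_def using assms by (intro Max_ge finite_idx_dists) blast+

lemma idx_diam_le:
  assumes "finite I" "I \<noteq> {}" "\<And>i j. i \<in> I \<Longrightarrow> j \<in> I \<Longrightarrow> norm (x i - x j) \<le> c"
  shows "idx_diam x I \<le> c"
proof -
  have "{norm (x i - x j) | i j. i \<in> I \<and> j \<in> I} \<noteq> {}" using assms(2) by blast
  then show ?thesis
    unfolding idx_diam_def using assms(3) by (subst Max_le_iff) (auto intro: finite_idx_dists assms(1))
qed

lemma idx_diam_mono:
  assumes "finite K" "I \<subseteq> K" "I \<noteq> {}"
  shows "idx_diam x I \<le> idx_diam x K"
  using assms finite_subset by (intro idx_diam_le) (auto intro: norm_diff_le_idx_diam)

lemma norm_idx_avg_diff_le:
  fixes x :: "nat \<Rightarrow> 'a::real_normed_vector"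
  assumes "finite I" "I \<noteq> {}" "\<And>i. i \<in> I \<Longrightarrow> norm (x i - y) \<le> c"
  shows "norm (idx_avg x I - y) \<le> c"
proof -
  have n: "real (card I) > 0" using assms by (simp add: card_gt_0_iff)
  have "idx_avg x I - y = (1 / real (card I)) *\<^sub>R (\<Sum>i\<in>I. x i - y)"
    using n by (simp add: idx_avg_def sum_subtractf scaleR_diff_right sum_constant_scaleR)
  then have "norm (idx_avg x I - y) = (1 / real (card I)) * norm (\<Sum>i\<in>I. x i - y)"
    using n by simp
  also have "\<dots> \<le> (1 / real (card I)) * (\<Sum>i\<in>I. norm (x i - y))"
    using n by (intro mult_left_mono norm_sum) auto
  also have "\<dots> \<le> (1 / real (card I)) * (\<Sum>i\<in>I. c)"
    using n assms(3) by (intro mult_left_mono sum_mono) auto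
  also have "\<dots> = c" using n by simp
  finally show ?thesis .
qed

lemma norm_idx_avg_diff_le_idx_diam:
  fixes x :: "nat \<Rightarrow> 'a::real_normed_vector"
  assumes "finite I" "i \<in> I"
  shows "norm (idx_avg x I - x i) \<le> idx_diam x I"
  using assms by (intro norm_idx_avg_diff_le) (auto intro: norm_diff_le_idx_diam)

lemma Int_nonempty_if_card_sum_gt:
  assumes "finite S" "I \<subseteq> S" "H \<subseteq> S" "card S < card I + card H"
  shows "I \<inter> H \<noteq> {}"
proof
  assume "I \<inter> H = {}"
  with assms have "card (I \<union> H) = card I + card H"
    by (intro card_Un_disjoint) (auto intro: finite_subset)
  moreover have "card (I \<union> H) \<le> card S" using assms by (intro card_mono) auto
  ultimately show False using assms(4) by simp
qed

lemma mda_set_near_candidate: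
  fixes x :: "nat \<Rightarrow> 'a::real_normed_vector"
  assumes mda: "is_mda_set f x S I"
    and "finite S" "2 * f < card S" "H \<subseteq> S" "card H = card S - f"
  obtains i where "i \<in> I" "i \<in> H" "norm (idx_avg x I - x i) \<le> idx_diam x H"
proof -
  have I: "I \<subseteq> S" "card I = card S - f" "idx_diam x I \<le> idx_diam x H"
    using mda assms(4,5) unfolding is_mda_set_def by auto
  have "I \<inter> H \<noteq> {}"
    using assms I by (intro Int_nonempty_if_card_sum_gt[of S]) auto
  then obtain i where i: "i \<in> I" "i \<in> H" by blast
  have "finite I" using I(1) \<open>finite S\<close> finite_subset by blast
  then have "norm (idx_avg x I - x i) \<le> idx_diam x H"
    using norm_idx_avg_diff_le_idx_diam[OF _ i(1), of x] I(3) by fastforce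
  with i that show ?thesis by blast
qed

lemma norm_mda_avg_diff_le:
  fixes x :: "nat \<Rightarrow> 'a::real_normed_vector"
  assumes "is_mda_set f x S1 I" "finite S1" "2 * f < card S1"
    and "H1 \<subseteq> S1" "card H1 = card S1 - f"
    and "is_mda_set f x S2 J" "finite S2" "2 * f < card S2"
    and "H2 \<subseteq> S2" "card H2 = card S2 - f"
  shows "norm (idx_avg x I - idx_avg x J) \<le> 3 * idx_diam x (H1 \<union> H2)"
proof -
  define D where "D = idx_diam x (H1 \<union> H2)"
  have fin: "finite (H1 \<union> H2)" using assms(2,4,7,9) finite_subset by blast
  obtain i where i: "i \<in> H1" and avg_I: "norm (idx_avg x I - x i) \<le> idx_diam x H1"
    using mda_set_near_candidate[OF assms(1-5)] by blast
  obtain j where j: "j \<in> H2" and avg_J: "norm (idx_avg x J - x j) \<le> idx_diam x H2"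
    using mda_set_near_candidate[OF assms(6-10)] by blast
  have "idx_diam x H1 \<le> D" "idx_diam x H2 \<le> D"
    unfolding D_def using i j fin by (auto intro: idx_diam_mono)
  moreover have "norm (x i - x j) \<le> D"
    unfolding D_def using i j fin by (intro norm_diff_le_idx_diam) auto
  moreover have "norm (idx_avg x I - idx_avg x J)
      \<le> norm (idx_avg x I - x i) + norm (x i - x j) + norm (idx_avg x J - x j)"
    by (metis norm_diff_triangle_le norm_minus_commute order_refl)
  ultimately show ?thesis using avg_I avg_J unfolding D_def by linarith
qed

theorem mainTheorem2:
  fixes x :: "nat \<Rightarrow> 'a::euclidean_space" and f q :: nat and I J :: "nat set"
  assumes "f \<ge> 1" and "q \<ge> 2 * f + 1"
    and "is_mda_set f x {1..q} I"
    and "is_mda_set f x {q+1..2*q} J"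
  shows "norm (idx_avg x I - idx_avg x J)
           \<le> 3 * idx_diam x ({1..q-f} \<union> {q+1..2*q-f})"
  using assms(2) by (intro norm_mda_avg_diff_le[OF assms(3) _ _ _ _ assms(4)]) auto

end
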